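(* Let $X$ be a finite-dimensional real normed space and let $\{H(a_i^*,\alpha_i)\mid i\in S\}$ be a family of hyperplanes in $X$ indexed by a set $S$, where $a_i^*\in X^*\setminus\{0\}$, $\alpha_i\in\mathbb{R}$. For each (possibly empty) subset $I\subset S$ put $$D_I=\Big(\bigcap_{i\in I}\{x\mid a_i^*(x)\le\alpha_i\}\Big)\cap\Big(\bigcap_{i\in S\setminus I}\{x\mid a_i^*(x)\ge\alpha_i\}\Big).$$ Then for any subsets $I,J\subset S$ one has either $D_I=D_J$ or $\mathrm{ri}\,D_I\cap\mathrm{ri}\,D_J=\varnothing$.
   Context: $H(a^*,\alpha)=\{x\in X\mid a^*(x)=\alpha\}$. $\mathrm{ri}\,M$ denotes the relative interior of a convex set $M$ (its interior relative to its affine hull). *)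

theory Defs
  imports "HOL-Analysis.Analysis"
begin

definition cellD :: "'i set \<Rightarrow> ('i \<Rightarrow> 'a \<Rightarrow> real) \<Rightarrow> ('i \<Rightarrow> real) \<Rightarrow> 'i set \<Rightarrow> 'a set" where
  "cellD S a alpha I =
     (\<Inter>i\<in>I. {x. a i x \<le> alpha i}) \<inter> (\<Inter>i\<in>S - I. {x. a i x \<ge> alpha i})"

end

theory Submission
  imports Defs
begin

text \<open>A point z of ri D_I \<inter> ri D_J lies in both cells, so every hyperplane separating
  the index sets (i \<in> I - J or i \<in> J - I) passes through z. A linear functional that is
  bounded on a convex set by its value at a relative interior point is constant there,
  so each of these hyperplanes contains the whole of D_I and of D_J. Hence D_I and D_J
  are described by the same inequalities, and they coincide.\<close>

lemma rel_interior_linear_max_imp_const: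
  fixes C :: "'a::euclidean_space set" and f :: "'a \<Rightarrow> real"
  assumes "linear f" "convex C" "z \<in> rel_interior C"
    and bound: "\<And>y. y \<in> C \<Longrightarrow> f y \<le> c" and "f z = c" and y: "y \<in> C"
  shows "f y = c"
proof -
  \<comment> \<open>the segment from y through z extends a little beyond z inside C; there f would exceed c if f y < c\<close>
  from hull_inc[OF y] obtain e where e: "e > 1" "(1 - e) *\<^sub>R y + e *\<^sub>R z \<in> C"
    using convex_rel_interior_if2[OF assms(2,3), rule_format, of y] by blast
  have "f ((1 - e) *\<^sub>R y + e *\<^sub>R z) = (1 - e) * f y + e * c"
    using assms(1,5) by (simp add: linear_add linear_scale)
  with bound[OF e(2)] have "(1 - e) * (f y - c) \<le> 0"
    by (simp add: algebra_simps)
  then have "(e - 1) * (f y - c) \<ge> 0"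
    by (simp add: algebra_simps)
  with e(1) have "f y \<ge> c"
    by (simp add: zero_le_mult_iff)
  with bound[OF y] show ?thesis
    by simp
qed

lemma rel_interior_linear_min_imp_const:
  fixes C :: "'a::euclidean_space set" and f :: "'a \<Rightarrow> real"
  assumes "linear f" "convex C" "z \<in> rel_interior C"
    and "\<And>y. y \<in> C \<Longrightarrow> f y \<ge> c" and "f z = c" and "y \<in> C"
  shows "f y = c"
proof -
  have "- f y = - c"
  proof (rule rel_interior_linear_max_imp_const[of "\<lambda>x. - f x" C z])
    show "linear (\<lambda>x. - f x)"
      using assms(1) by (rule linear_compose_neg)
    show "- f x \<le> - c" if "x \<in> C" for x
      using assms(4)[OF that] by simp
  qed (use assms in auto)
  then show ?thesis
    by simp
qed

lemma convex_cellD: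
  assumes "\<And>i. i \<in> S \<Longrightarrow> linear (a i)" "I \<subseteq> S"
  shows "convex (cellD S a alpha I)"
proof -
  have "convex {x. a i x \<le> alpha i}" "convex {x. a i x \<ge> alpha i}" if "i \<in> S" for i
    using convex_linear_vimage[OF assms(1)[OF that], of "{..alpha i}"]
      convex_linear_vimage[OF assms(1)[OF that], of "{alpha i..}"]
    by (simp_all add: vimage_def)
  with assms(2) show ?thesis
    unfolding cellD_def by (intro convex_Int convex_INT) auto
qed

lemma cellD_rel_interior_tight:
  fixes a :: "'i \<Rightarrow> 'a::euclidean_space \<Rightarrow> real"
  assumes lin: "\<And>i. i \<in> S \<Longrightarrow> linear (a i)" and "K \<subseteq> S" and i: "i \<in> S"
    and z: "z \<in> rel_interior (cellD S a alpha K)" and "a i z = alpha i"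
    and y: "y \<in> cellD S a alpha K"
  shows "a i y = alpha i"
proof -
  have cv: "convex (cellD S a alpha K)"
    by (intro convex_cellD lin \<open>K \<subseteq> S\<close>)
  show ?thesis
  proof (cases "i \<in> K")
    case True
    then have "\<And>x. x \<in> cellD S a alpha K \<Longrightarrow> a i x \<le> alpha i"
      unfolding cellD_def by blast
    then show ?thesis
      using rel_interior_linear_max_imp_const[OF lin[OF i] cv z]
        \<open>a i z = alpha i\<close> y by blast
  next
    case False
    then have "\<And>x. x \<in> cellD S a alpha K \<Longrightarrow> a i x \<ge> alpha i"
      using i unfolding cellD_def by blast
    then show ?thesis
      using rel_interior_linear_min_imp_const[OF lin[OF i] cv z]
        \<open>a i z = alpha i\<close> y by blast
  qed
qed

lemma cellD_subset_if_rel_interiors_meet: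
  fixes a :: "'i \<Rightarrow> 'a::euclidean_space \<Rightarrow> real"
  assumes lin: "\<And>i. i \<in> S \<Longrightarrow> linear (a i)" and K: "K \<subseteq> S" and L: "L \<subseteq> S"
    and zK: "z \<in> rel_interior (cellD S a alpha K)"
    and zL: "z \<in> rel_interior (cellD S a alpha L)"
  shows "cellD S a alpha K \<subseteq> cellD S a alpha L"
proof
  fix y assume y: "y \<in> cellD S a alpha K"
  have zK': "z \<in> cellD S a alpha K" and zL': "z \<in> cellD S a alpha L"
    using zK zL rel_interior_subset by blast+
  have tight: "a i y = alpha i" if i: "i \<in> S" "i \<in> K \<longleftrightarrow> i \<notin> L" for i
  proof -
    have "a i z \<le> alpha i" "a i z \<ge> alpha i"
      using zK' zL' i unfolding cellD_def by (cases "i \<in> K"; auto)+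
    then show ?thesis
      using cellD_rel_interior_tight[OF lin K i(1) zK _ y] by simp
  qed
  have "a i y \<le> alpha i" if "i \<in> L" for i
    using that y L tight[of i] unfolding cellD_def by (cases "i \<in> K") auto
  moreover have "a i y \<ge> alpha i" if "i \<in> S - L" for i
    using that y tight[of i] unfolding cellD_def by (cases "i \<in> K") auto
  ultimately show "y \<in> cellD S a alpha L"
    unfolding cellD_def by blast
qed

theorem lemma3p1:
  fixes S :: "'i set"
    and a :: "'i \<Rightarrow> 'a::euclidean_space \<Rightarrow> real"
    and alpha :: "'i \<Rightarrow> real"
    and I J :: "'i set"
  assumes "\<And>i. i \<in> S \<Longrightarrow> bounded_linear (a i)"
    and "\<And>i. i \<in> S \<Longrightarrow> a i \<noteq> (\<lambda>x. 0)"
    and "I \<subseteq> S" and "J \<subseteq> S"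
  shows "cellD S a alpha I = cellD S a alpha J \<or>
         rel_interior (cellD S a alpha I) \<inter> rel_interior (cellD S a alpha J) = {}"
proof (rule disjCI)
  assume "rel_interior (cellD S a alpha I) \<inter> rel_interior (cellD S a alpha J) \<noteq> {}"
  then obtain z where zI: "z \<in> rel_interior (cellD S a alpha I)"
    and zJ: "z \<in> rel_interior (cellD S a alpha J)" by blast
  have lin: "\<And>i. i \<in> S \<Longrightarrow> linear (a i)"
    using assms(1) bounded_linear.linear by blast
  show "cellD S a alpha I = cellD S a alpha J"
    using cellD_subset_if_rel_interiors_meet[OF lin assms(3,4) zI zJ]
      cellD_subset_if_rel_interiors_meet[OF lin assms(4,3) zJ zI] by (rule subset_antisym)
qed

end
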